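(* Let $(X,e,\mu)$ be an $\mathrm{NP}_2$-digital H-space. Then $X_e$, the connected component of $X$ containing $e$, is $\mathrm{NP}_2$-contractible.
   Context: A digital image is a finite set $X\subset\mathbb{Z}^n$ with a reflexive symmetric adjacency relation (a finite reflexive graph); continuous maps send adjacent points to adjacent points. On products, $\mathrm{NP}_2$ declares two tuples adjacent iff coordinates are adjacent in at most 2 positions and equal elsewhere. An $\mathrm{NP}_2$-homotopy from $f$ to $g:X\to Y$ is an $\mathrm{NP}_2$-continuous $H:X\times[0,m]_{\mathbb{Z}}\to Y$ with $H(\cdot,0)=f$, $H(\cdot,m)=g$; write $f\simeq_2 g$. A digital image is $\mathrm{NP}_2$-contractible if it is $\mathrm{NP}_2$-homotopy equivalent to a single point (equivalently its identity is $\mathrm{NP}_2$-homotopic to a constant map). $(f,g)(x)=(f(x),g(x))$; $c_e$ is constant at $e$. An $\mathrm{NP}_2$-digital H-space is $(X,e,\mu)$ with $\mu:X\times X\to X$ $\mathrm{NP}_2$-continuous, $\mu\circ(\mathrm{id}_X,c_e)\simeq_2\mathrm{id}_X$, $\mu\circ(c_e,\mathrm{id}_X)\simeq_2\mathrm{id}_X$ (homotopies need not be pointed). *)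

theory Defs
  imports "HOL-Analysis.Analysis"
begin

definition digital_image :: "'a set \<Rightarrow> ('a \<Rightarrow> 'a \<Rightarrow> bool) \<Rightarrow> bool" where
  "digital_image X adj \<longleftrightarrow> finite X \<and> (\<forall>x\<in>X. adj x x)
     \<and> (\<forall>x\<in>X. \<forall>y\<in>X. adj x y \<longrightarrow> adj y x)"

definition dcont :: "'a set \<Rightarrow> ('a \<Rightarrow> 'a \<Rightarrow> bool) \<Rightarrow> 'b set \<Rightarrow> ('b \<Rightarrow> 'b \<Rightarrow> bool)
    \<Rightarrow> ('a \<Rightarrow> 'b) \<Rightarrow> bool" where
  "dcont X adjX Y adjY f \<longleftrightarrow> (\<forall>x\<in>X. f x \<in> Y)
     \<and> (\<forall>x\<in>X. \<forall>x'\<in>X. adjX x x' \<longrightarrow> adjY (f x) (f x'))"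

text \<open>NP_2 adjacency on a product of two digital images: the tuples are adjacent iff
  coordinates are adjacent in at most 2 positions and equal elsewhere; with two factors
  this says each coordinate is equal or adjacent.\<close>
definition np2_adj :: "('a \<Rightarrow> 'a \<Rightarrow> bool) \<Rightarrow> ('b \<Rightarrow> 'b \<Rightarrow> bool)
    \<Rightarrow> 'a \<times> 'b \<Rightarrow> 'a \<times> 'b \<Rightarrow> bool" where
  "np2_adj adj1 adj2 p q \<longleftrightarrow>
     (fst p = fst q \<or> adj1 (fst p) (fst q)) \<and> (snd p = snd q \<or> adj2 (snd p) (snd q))"

definition int_adj :: "int \<Rightarrow> int \<Rightarrow> bool" where
  "int_adj s t \<longleftrightarrow> \<bar>s - t\<bar> \<le> 1"

definition np2_homotopic :: "'a set \<Rightarrow> ('a \<Rightarrow> 'a \<Rightarrow> bool) \<Rightarrow> 'b set \<Rightarrow> ('b \<Rightarrow> 'b \<Rightarrow> bool)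
    \<Rightarrow> ('a \<Rightarrow> 'b) \<Rightarrow> ('a \<Rightarrow> 'b) \<Rightarrow> bool" where
  "np2_homotopic X adjX Y adjY f g \<longleftrightarrow>
     (\<exists>(m::int) H. 0 \<le> m
        \<and> dcont (X \<times> {0..m}) (np2_adj adjX int_adj) Y adjY H
        \<and> (\<forall>x\<in>X. H (x, 0) = f x) \<and> (\<forall>x\<in>X. H (x, m) = g x))"

definition np2_H_space :: "'a set \<Rightarrow> ('a \<Rightarrow> 'a \<Rightarrow> bool) \<Rightarrow> 'a \<Rightarrow> ('a \<times> 'a \<Rightarrow> 'a) \<Rightarrow> bool" where
  "np2_H_space X adj e \<mu> \<longleftrightarrow> digital_image X adj \<and> e \<in> X
     \<and> dcont (X \<times> X) (np2_adj adj adj) X adj \<mu>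
     \<and> np2_homotopic X adj X adj (\<lambda>x. \<mu> (x, e)) id
     \<and> np2_homotopic X adj X adj (\<lambda>x. \<mu> (e, x)) id"

definition component :: "'a set \<Rightarrow> ('a \<Rightarrow> 'a \<Rightarrow> bool) \<Rightarrow> 'a \<Rightarrow> 'a set" where
  "component X adj e = {y \<in> X. (\<lambda>a b. a \<in> X \<and> b \<in> X \<and> adj a b)\<^sup>*\<^sup>* e y}"

definition np2_contractible :: "'a set \<Rightarrow> ('a \<Rightarrow> 'a \<Rightarrow> bool) \<Rightarrow> bool" where
  "np2_contractible X adj \<longleftrightarrow> (\<exists>p\<in>X. np2_homotopic X adj X adj id (\<lambda>_. p))"

end

theory Submission
  imports Defs
begin

text \<open>An NP_2 homotopy between self-maps of a digital image is the same as a finite chain of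
  continuous maps in which consecutive maps send adjacent points to adjacent points. The
  H-space structure restricts to the component X_e of e, where it is connected. There choose a
  map f homotopic to the identity whose image R is as small as possible. No point of R is
  dominated by another point of R (folding it onto the other one would shrink R), and hence every
  map homotopic to the identity with values in R permutes R and is determined on R by any map
  adjacent to it. Comparing the translations x \<mapsto> f (\<mu> (x, y)) by a neighbour y \<in> R of
  f e and by f e itself shows y = f e; so f is constant on the connected X_e.\<close>

section \<open>Components and restriction to a component\<close>

lemma component_subset: "component X adj e \<subseteq> X"
  by (auto simp: component_def)

lemma self_in_component: "e \<in> X \<Longrightarrow> e \<in> component X adj e"
  by (simp add: component_def)

lemma component_trans:
  assumes "a \<in> component X adj e"
  shows "component X adj a \<subseteq> component X adj e"
  using assms by (auto simp: component_def intro: rtranclp_trans)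

lemma component_adj_closed:
  assumes "y \<in> component X adj e" "z \<in> X" "adj y z"
  shows "z \<in> component X adj e"
  using assms by (auto simp: component_def intro: rtranclp.rtrancl_into_rtrancl)

lemma dcont_component_image:
  assumes F: "dcont X adjX Y adjY F" and x: "x \<in> component X adjX e"
  shows "F x \<in> component Y adjY (F e)"
proof -
  have "(\<lambda>a b. a \<in> X \<and> b \<in> X \<and> adjX a b)\<^sup>*\<^sup>* e x" "x \<in> X"
    using x by (auto simp: component_def)
  then show ?thesis
  proof (induction rule: rtranclp_induct)
    case base
    then show ?case using F by (auto simp: dcont_def component_def)
  next
    case (step a b)
    then have "F a \<in> component Y adjY (F e)" by blast
    then show ?case
      using step F by (auto simp: dcont_def intro: component_adj_closed)
  qed
qed

lemma component_component: "component (component X adj e) adj e = component X adj e"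
proof
  show "component (component X adj e) adj e \<subseteq> component X adj e"
    by (rule component_subset)
next
  let ?C = "component X adj e"
  show "?C \<subseteq> component ?C adj e"
  proof
    fix y assume "y \<in> ?C"
    then have "(\<lambda>a b. a \<in> X \<and> b \<in> X \<and> adj a b)\<^sup>*\<^sup>* e y" "y \<in> X"
      by (auto simp: component_def)
    then show "y \<in> component ?C adj e"
    proof (induction rule: rtranclp_induct)
      case base
      then show ?case by (simp add: self_in_component)
    next
      case (step a b)
      then have "a \<in> component ?C adj e" "a \<in> ?C" "b \<in> ?C"
        using component_adj_closed[of a X adj e b] component_subset[of ?C adj e] by blast+
      then show ?case using step component_adj_closed by metis
    qed
  qed
qed

lemma digital_image_subset: "digital_image X adj \<Longrightarrow> C \<subseteq> X \<Longrightarrow> digital_image C adj"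
  by (auto simp: digital_image_def intro: finite_subset)

lemma dcont_restrict:
  assumes "dcont A adjA B adjB H" "A' \<subseteq> A" "\<And>x. x \<in> A' \<Longrightarrow> H x \<in> B'"
  shows "dcont A' adjA B' adjB H"
  using assms unfolding dcont_def by blast

lemma dcont_id: "dcont X adj X adj id"
  by (simp add: dcont_def)

lemma dcont_const: "y \<in> Y \<Longrightarrow> adjY y y \<Longrightarrow> dcont X adjX Y adjY (\<lambda>_. y)"
  by (simp add: dcont_def)

lemma dcont_comp:
  "dcont Y adjY Z adjZ f \<Longrightarrow> dcont X adjX Y adjY g \<Longrightarrow> dcont X adjX Z adjZ (\<lambda>x. f (g x))"
  by (simp add: dcont_def)

lemma dcont_np2_slice:
  assumes \<mu>: "dcont (X \<times> Y) (np2_adj adjX adjY) Z adjZ \<mu>" and y: "y \<in> Y"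
  shows "dcont X adjX Z adjZ (\<lambda>x. \<mu> (x, y))"
  unfolding dcont_def
proof (intro conjI ballI impI)
  fix x assume "x \<in> X"
  then show "\<mu> (x, y) \<in> Z" using \<mu> y unfolding dcont_def by blast
next
  fix x x' assume "x \<in> X" "x' \<in> X" "adjX x x'"
  moreover have "np2_adj adjX adjY (x, y) (x', y)" using \<open>adjX x x'\<close> by (simp add: np2_adj_def)
  ultimately show "adjZ (\<mu> (x, y)) (\<mu> (x', y))" using \<mu> y unfolding dcont_def by blast
qed

lemma np2_homotopic_dcont_start:
  assumes "np2_homotopic X adj Y adjY f g"
  shows "dcont X adj Y adjY f"
proof -
  obtain m H where m: "0 \<le> m" and H: "dcont (X \<times> {0..m}) (np2_adj adj int_adj) Y adjY H"
    and H0: "\<forall>x\<in>X. H (x, 0) = f x"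
    using assms unfolding np2_homotopic_def by auto
  have "dcont X adj Y adjY (\<lambda>x. H (x, 0))" using dcont_np2_slice[OF H] m by simp
  then show ?thesis using H0 by (simp add: dcont_def)
qed

lemma np2_homotopy_track_in_component:
  assumes H: "dcont (X \<times> {0..m}) (np2_adj adj int_adj) Y adjY H"
    and x: "x \<in> X" and t: "0 \<le> t" "t \<le> m"
  shows "H (x, t) \<in> component Y adjY (H (x, m))"
proof -
  have "H (x, m - int k) \<in> component Y adjY (H (x, m))" if "int k \<le> m" for k
    using that
  proof (induction k)
    case 0
    then show ?case using H x by (simp add: dcont_def self_in_component)
  next
    case (Suc k)
    have "H (x, m - int (Suc k)) \<in> Y" "adjY (H (x, m - int k)) (H (x, m - int (Suc k)))"
      using H x Suc.prems by (auto simp: dcont_def np2_adj_def int_adj_def)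
    then show ?case using Suc by (auto intro: component_adj_closed)
  qed
  from this[of "nat (m - t)"] show ?thesis using t by simp
qed

text \<open>Every stage H(-, t) is continuous and H(e, t) is joined to H(e, m) = e along the
  homotopy, so every stage maps the component of e into itself.\<close>
lemma np2_homotopic_id_component:
  assumes "np2_homotopic X adj X adj f id" "e \<in> X"
  shows "np2_homotopic (component X adj e) adj (component X adj e) adj f id"
proof -
  let ?C = "component X adj e"
  obtain m H where m: "0 \<le> m" and H: "dcont (X \<times> {0..m}) (np2_adj adj int_adj) X adj H"
    and H0: "\<forall>x\<in>X. H (x, 0) = f x" and Hm: "\<forall>x\<in>X. H (x, m) = x"
    using assms(1) unfolding np2_homotopic_def by auto
  have HC: "H (x, t) \<in> ?C" if "x \<in> ?C" "0 \<le> t" "t \<le> m" for x t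
  proof -
    have "H (e, m) = e" using Hm assms(2) by blast
    then have "H (e, t) \<in> ?C"
      using np2_homotopy_track_in_component[OF H assms(2) that(2,3)] by simp
    then have "component X adj (H (e, t)) \<subseteq> ?C"
      by (rule component_trans)
    moreover have "dcont X adj X adj (\<lambda>x. H (x, t))"
      using dcont_np2_slice[OF H, of t] that(2,3) by simp
    then have "H (x, t) \<in> component X adj (H (e, t))"
      using dcont_component_image that(1) by fastforce
    ultimately show ?thesis by blast
  qed
  have "dcont (?C \<times> {0..m}) (np2_adj adj int_adj) ?C adj H"
    by (rule dcont_restrict[OF H]) (use component_subset[of X adj e] HC in auto)
  moreover have "\<forall>x\<in>?C. H (x, 0) = f x" "\<forall>x\<in>?C. H (x, m) = id x"
    using H0 Hm component_subset[of X adj e] by auto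
  ultimately show ?thesis
    unfolding np2_homotopic_def using m by (intro exI[of _ m] exI[of _ H]) simp
qed

lemma np2_H_space_component:
  assumes "np2_H_space X adj e \<mu>"
  shows "np2_H_space (component X adj e) adj e \<mu>"
proof -
  let ?C = "component X adj e"
  have X: "digital_image X adj" and e: "e \<in> X"
    and \<mu>: "dcont (X \<times> X) (np2_adj adj adj) X adj \<mu>"
    and hl: "np2_homotopic X adj X adj (\<lambda>x. \<mu> (x, e)) id"
    and hr: "np2_homotopic X adj X adj (\<lambda>x. \<mu> (e, x)) id"
    using assms by (auto simp: np2_H_space_def)
  have hlC: "np2_homotopic ?C adj ?C adj (\<lambda>x. \<mu> (x, e)) id"
    and hrC: "np2_homotopic ?C adj ?C adj (\<lambda>x. \<mu> (e, x)) id"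
    using np2_homotopic_id_component[OF hl e] np2_homotopic_id_component[OF hr e] by simp_all
  have \<mu>C: "\<mu> (x, y) \<in> ?C" if "x \<in> ?C" "y \<in> ?C" for x y
  proof -
    have "y \<in> X" using that(2) component_subset[of X adj e] by blast
    with \<mu> have "dcont X adj X adj (\<lambda>x. \<mu> (x, y))"
      by (rule dcont_np2_slice)
    from dcont_component_image[OF this that(1)]
    have "\<mu> (x, y) \<in> component X adj (\<mu> (e, y))" .
    moreover have "\<mu> (e, y) \<in> ?C"
      using np2_homotopic_dcont_start[OF hrC] that(2) by (simp add: dcont_def)
    then have "component X adj (\<mu> (e, y)) \<subseteq> ?C"
      by (rule component_trans)
    ultimately show ?thesis by blast
  qed
  have "dcont (?C \<times> ?C) (np2_adj adj adj) ?C adj \<mu>"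
    by (rule dcont_restrict[OF \<mu>]) (use component_subset[of X adj e] \<mu>C in auto)
  then show ?thesis
    using digital_image_subset[OF X component_subset] self_in_component[OF e] hlC hrC
    by (simp add: np2_H_space_def)
qed

section \<open>Homotopies as chains of adjacent maps\<close>

lemma rtranclp_map:
  assumes "\<And>a b. R a b \<Longrightarrow> S (F a) (F b)" and "R\<^sup>*\<^sup>* a b"
  shows "S\<^sup>*\<^sup>* (F a) (F b)"
  using assms(2)
  by (induction rule: rtranclp_induct) (auto intro: rtranclp.rtrancl_into_rtrancl assms(1))

definition adjacent_maps :: "'a set \<Rightarrow> ('a \<Rightarrow> 'a \<Rightarrow> bool) \<Rightarrow> ('a \<Rightarrow> 'a) \<Rightarrow> ('a \<Rightarrow> 'a) \<Rightarrow> bool" where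
  "adjacent_maps X adj f g \<longleftrightarrow> (\<forall>x\<in>X. \<forall>x'\<in>X. adj x x' \<longrightarrow> adj (f x) (g x'))"

definition homotopy_step :: "'a set \<Rightarrow> ('a \<Rightarrow> 'a \<Rightarrow> bool) \<Rightarrow> ('a \<Rightarrow> 'a) \<Rightarrow> ('a \<Rightarrow> 'a) \<Rightarrow> bool" where
  "homotopy_step X adj f g \<longleftrightarrow>
     dcont X adj X adj f \<and> dcont X adj X adj g \<and> adjacent_maps X adj f g"

abbreviation step_homotopic :: "'a set \<Rightarrow> ('a \<Rightarrow> 'a \<Rightarrow> bool) \<Rightarrow> ('a \<Rightarrow> 'a) \<Rightarrow> ('a \<Rightarrow> 'a) \<Rightarrow> bool" where
  "step_homotopic X adj \<equiv> (homotopy_step X adj)\<^sup>*\<^sup>*"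

lemma homotopy_step_comp:
  "homotopy_step X adj f f' \<Longrightarrow> homotopy_step X adj g g' \<Longrightarrow>
     homotopy_step X adj (\<lambda>x. f (g x)) (\<lambda>x. f' (g' x))"
  unfolding homotopy_step_def adjacent_maps_def dcont_def by auto

lemma homotopy_step_eqI:
  "dcont X adj X adj f \<Longrightarrow> (\<And>x. x \<in> X \<Longrightarrow> f x = g x) \<Longrightarrow> homotopy_step X adj f g"
  unfolding homotopy_step_def adjacent_maps_def dcont_def by simp

lemma step_homotopic_dcont:
  "step_homotopic X adj f g \<Longrightarrow> dcont X adj X adj f \<Longrightarrow> dcont X adj X adj g"
  by (induction rule: rtranclp_induct) (auto simp: homotopy_step_def)

lemma step_homotopic_comp:
  assumes "step_homotopic X adj f f'" "dcont X adj X adj f"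
    and "step_homotopic X adj g g'" "dcont X adj X adj g"
  shows "step_homotopic X adj (\<lambda>x. f (g x)) (\<lambda>x. f' (g' x))"
proof -
  have "step_homotopic X adj (\<lambda>x. f (g x)) (\<lambda>x. f' (g x))"
    using rtranclp_map[where F = "\<lambda>h x. h (g x)", OF _ assms(1)]
      homotopy_step_comp homotopy_step_eqI[OF assms(4)] by blast
  moreover have "step_homotopic X adj (\<lambda>x. f' (g x)) (\<lambda>x. f' (g' x))"
    using rtranclp_map[where F = "\<lambda>h x. f' (h x)", OF _ assms(3)]
      homotopy_step_comp homotopy_step_eqI[OF step_homotopic_dcont[OF assms(1,2)]] by blast
  ultimately show ?thesis by (rule rtranclp_trans)
qed

locale digital_img =
  fixes X :: "'a set" and adj :: "'a \<Rightarrow> 'a \<Rightarrow> bool"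
  assumes digital_image: "digital_image X adj"
begin

lemma finite: "finite X" and adj_refl: "x \<in> X \<Longrightarrow> adj x x"
  and adj_sym: "x \<in> X \<Longrightarrow> y \<in> X \<Longrightarrow> adj x y \<Longrightarrow> adj y x"
  using digital_image by (auto simp: digital_image_def)

lemma homotopy_step_sym:
  assumes "homotopy_step X adj f g"
  shows "homotopy_step X adj g f"
proof -
  have "adj (g x) (f x')" if "x \<in> X" "x' \<in> X" "adj x x'" for x x'
  proof -
    have "adj (f x') (g x)"
      using assms that adj_sym[OF that] by (simp add: homotopy_step_def adjacent_maps_def)
    then show ?thesis using assms that adj_sym by (simp add: homotopy_step_def dcont_def)
  qed
  then show ?thesis using assms by (simp add: homotopy_step_def adjacent_maps_def)
qed

lemma step_homotopic_sym: "step_homotopic X adj f g \<Longrightarrow> step_homotopic X adj g f"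
  by (induction rule: rtranclp_induct)
    (auto intro: converse_rtranclp_into_rtranclp homotopy_step_sym)

lemma step_homotopic_const:
  assumes "(\<lambda>a b. a \<in> X \<and> b \<in> X \<and> adj a b)\<^sup>*\<^sup>* y z" "y \<in> X"
  shows "step_homotopic X adj (\<lambda>_. y) (\<lambda>_. z)"
  using assms
proof (induction rule: rtranclp_induct)
  case (step a b)
  then have "homotopy_step X adj (\<lambda>_. a) (\<lambda>_. b)"
    by (auto simp: homotopy_step_def adjacent_maps_def dcont_def adj_refl)
  then show ?case using step by (auto intro: rtranclp.rtrancl_into_rtrancl)
qed simp

lemma np2_homotopic_imp_step_homotopic:
  assumes "np2_homotopic X adj X adj f g"
  shows "step_homotopic X adj f g"
proof -
  obtain m H where m: "0 \<le> m" and H: "dcont (X \<times> {0..m}) (np2_adj adj int_adj) X adj H"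
    and H0: "\<forall>x\<in>X. H (x, 0) = f x" and Hm: "\<forall>x\<in>X. H (x, m) = g x"
    using assms unfolding np2_homotopic_def by auto
  define F where "F i = (\<lambda>x. H (x, int i))" for i
  have F_dcont: "dcont X adj X adj (F i)" if "int i \<le> m" for i
    unfolding F_def using dcont_np2_slice[OF H, of "int i"] that by simp
  have F_step: "homotopy_step X adj (F i) (F (Suc i))" if "int (Suc i) \<le> m" for i
  proof -
    have "adjacent_maps X adj (F i) (F (Suc i))"
      using H that unfolding adjacent_maps_def dcont_def F_def by (auto simp: np2_adj_def int_adj_def)
    then show ?thesis using F_dcont that by (simp add: homotopy_step_def)
  qed
  have "step_homotopic X adj (F 0) (F k)" if "int k \<le> m" for k
    using that
  proof (induction k)
    case (Suc k)
    then show ?case using F_step[of k] by (auto intro: rtranclp.rtrancl_into_rtrancl)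
  qed simp
  then have "step_homotopic X adj (F 0) (F (nat m))" using m by simp
  moreover have "homotopy_step X adj f (F 0)"
    using F_dcont[of 0] H0 m by (intro homotopy_step_eqI) (auto simp: F_def dcont_def)
  moreover have "homotopy_step X adj (F (nat m)) g"
    using F_dcont[of "nat m"] Hm m by (intro homotopy_step_eqI) (auto simp: F_def)
  ultimately show ?thesis
    by (meson converse_rtranclp_into_rtranclp rtranclp.rtrancl_into_rtrancl)
qed

lemma np2_homotopic_refl:
  assumes "dcont X adj X adj f"
  shows "np2_homotopic X adj X adj f f"
proof -
  have "dcont (X \<times> {0..0}) (np2_adj adj int_adj) X adj (\<lambda>p. f (fst p))"
    using assms adj_refl unfolding dcont_def np2_adj_def by auto
  then show ?thesis unfolding np2_homotopic_def by (intro exI[of _ 0]) auto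
qed

lemma np2_homotopic_extend:
  assumes "np2_homotopic X adj X adj f b" and bc: "homotopy_step X adj b c"
  shows "np2_homotopic X adj X adj f c"
proof -
  obtain m H where m: "0 \<le> m" and H: "dcont (X \<times> {0..m}) (np2_adj adj int_adj) X adj H"
    and H0: "\<forall>x\<in>X. H (x, 0) = f x" and Hm: "\<forall>x\<in>X. H (x, m) = b x"
    using assms(1) unfolding np2_homotopic_def by auto
  define H' where "H' p = (if snd p \<le> m then H p else c (fst p))" for p
  have cb: "homotopy_step X adj c b" using bc by (rule homotopy_step_sym)
  have H'_adj: "adj (H' (x, t)) (H' (x', t'))"
    if xs: "x \<in> X" "x' \<in> X" "adj x x'" and ts: "t \<in> {0..m+1}" "t' \<in> {0..m+1}" "\<bar>t - t'\<bar> \<le> 1"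
    for x x' t t'
  proof -
    consider "t \<le> m" "t' \<le> m" | "t = m" "t' = m + 1" | "t = m + 1" "t' = m" | "m < t" "m < t'"
      using ts(3) by linarith
    then show ?thesis
    proof cases
      case 1
      then show ?thesis using H xs ts by (auto simp: H'_def dcont_def np2_adj_def int_adj_def)
    next
      case 2
      then show ?thesis using bc xs Hm by (simp add: H'_def homotopy_step_def adjacent_maps_def)
    next
      case 3
      then show ?thesis using cb xs Hm by (simp add: H'_def homotopy_step_def adjacent_maps_def)
    qed (use bc xs in \<open>simp add: H'_def homotopy_step_def dcont_def\<close>)
  qed
  have "H' p \<in> X" if "p \<in> X \<times> {0..m+1}" for p
    using that H bc by (auto simp: H'_def dcont_def homotopy_step_def)
  moreover have "adj (H' p) (H' q)"
    if "p \<in> X \<times> {0..m+1}" "q \<in> X \<times> {0..m+1}" "np2_adj adj int_adj p q" for p q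
    using that H'_adj[of "fst p" "fst q" "snd p" "snd q"] adj_refl
    by (cases p, cases q) (auto simp: np2_adj_def int_adj_def)
  ultimately have "dcont (X \<times> {0..m+1}) (np2_adj adj int_adj) X adj H'"
    by (simp add: dcont_def)
  moreover have "\<forall>x\<in>X. H' (x, 0) = f x" "\<forall>x\<in>X. H' (x, m+1) = c x"
    using H0 m by (simp_all add: H'_def)
  ultimately show ?thesis
    unfolding np2_homotopic_def using m by (intro exI[of _ "m+1"] exI[of _ H']) simp
qed

lemma step_homotopic_imp_np2_homotopic:
  "step_homotopic X adj f g \<Longrightarrow> dcont X adj X adj f \<Longrightarrow> np2_homotopic X adj X adj f g"
  by (induction rule: rtranclp_induct) (auto intro: np2_homotopic_refl np2_homotopic_extend)

end

section \<open>Deformations with minimal image\<close>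

lemma inj_endomorphism_reflects_adj:
  assumes R: "finite R" "\<psi> ` R \<subseteq> R" "inj_on \<psi> R"
    and \<psi>: "\<forall>a\<in>R. \<forall>b\<in>R. adj a b \<longrightarrow> adj (\<psi> a) (\<psi> b)"
    and ab: "a \<in> R" "b \<in> R" "adj (\<psi> a) (\<psi> b)"
  shows "adj a b"
proof -
  define E where "E = {(a, b) \<in> R \<times> R. adj a b}"
  have "finite E"
    by (rule finite_subset[OF _ finite_cartesian_product[OF R(1) R(1)]]) (auto simp: E_def)
  moreover have "map_prod \<psi> \<psi> ` E \<subseteq> E" using R(2) \<psi> by (auto simp: E_def)
  moreover have "inj_on (map_prod \<psi> \<psi>) E"
    using map_prod_inj_on[OF R(3) R(3)] by (rule inj_on_subset) (auto simp: E_def)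
  ultimately have E: "map_prod \<psi> \<psi> ` E = E" by (rule endo_inj_surj)
  have "(\<psi> a, \<psi> b) \<in> E" using ab R(2) by (auto simp: E_def)
  then obtain a' b' where "(a', b') \<in> E" "\<psi> a' = \<psi> a" "\<psi> b' = \<psi> b"
    by (subst (asm) E[symmetric]) auto
  moreover from this have "a' = a" "b' = b"
    using R(3) ab by (auto simp: E_def dest: inj_onD)
  ultimately show ?thesis by (simp add: E_def)
qed

locale min_image_deformation = digital_img +
  fixes f :: "'a \<Rightarrow> 'a"
  assumes deformation: "step_homotopic X adj id f"
    and image_minimal: "\<And>h. step_homotopic X adj id h \<Longrightarrow> card (f ` X) \<le> card (h ` X)"
begin

lemma dcont_f: "dcont X adj X adj f"
  using step_homotopic_dcont[OF deformation dcont_id] .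

lemma image_subset: "f ` X \<subseteq> X"
  using dcont_f by (auto simp: dcont_def)

lemma deformation_into_image_bij:
  assumes \<phi>: "step_homotopic X adj id \<phi>" and sub: "\<phi> ` X \<subseteq> f ` X"
  shows "bij_betw \<phi> (f ` X) (f ` X)"
proof -
  have "step_homotopic X adj (\<lambda>x. id (id x)) (\<lambda>x. \<phi> (f x))"
    using step_homotopic_comp[OF \<phi> dcont_id deformation dcont_id] .
  then have "card (f ` X) \<le> card (\<phi> ` f ` X)"
    using image_minimal[of "\<lambda>x. \<phi> (f x)"] by (simp add: image_image id_def)
  moreover have "\<phi> ` f ` X \<subseteq> f ` X" using sub image_subset by blast
  ultimately have "\<phi> ` f ` X = f ` X"
    using card_seteq finite by (metis finite_imageI)
  then show ?thesis
    by (simp add: bij_betw_def eq_card_imp_inj_on finite)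
qed

text \<open>Otherwise redirecting every point mapped to u onto v is a single homotopy step
  that shrinks the image of f.\<close>
lemma dominated_point_eq:
  assumes u: "u \<in> f ` X" and v: "v \<in> f ` X"
    and dom: "\<And>w. w \<in> f ` X \<Longrightarrow> adj u w \<Longrightarrow> adj v w"
  shows "u = v"
proof (rule ccontr)
  assume "u \<noteq> v"
  define h where "h x = (if f x = u then v else f x)" for x
  have uX: "u \<in> X" and vX: "v \<in> X" using u v image_subset by blast+
  have h_img: "h x \<in> f ` X" if "x \<in> X" for x
    using that v by (simp add: h_def)
  have f_adj_h: "adj (f x) (h x')" if "x \<in> X" "x' \<in> X" "adj x x'" for x x'
  proof (cases "f x' = u")
    case True
    have fx: "f x \<in> f ` X" and fxX: "f x \<in> X" using that(1) image_subset by auto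
    have "adj (f x) (f x')" using dcont_f that by (simp add: dcont_def)
    with True have "adj u (f x)" using adj_sym[OF fxX uX] by simp
    then have "adj (f x) v" using dom[OF fx] adj_sym[OF vX fxX] by simp
    then show ?thesis using True by (simp add: h_def)
  next
    case False
    then show ?thesis using dcont_f that by (simp add: dcont_def h_def)
  qed
  have "adj (h x) (h x')" if "x \<in> X" "x' \<in> X" "adj x x'" for x x'
    using f_adj_h[OF that] dom h_img[OF that(2)] by (auto simp: h_def)
  moreover have "h x \<in> X" if "x \<in> X" for x
    using h_img that image_subset by blast
  ultimately have "homotopy_step X adj f h"
    using dcont_f f_adj_h by (simp add: homotopy_step_def adjacent_maps_def dcont_def)
  with deformation have "step_homotopic X adj id h"
    by (rule rtranclp.rtrancl_into_rtrancl[of "homotopy_step X adj"])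
  then have "card (f ` X) \<le> card (h ` X)"
    by (rule image_minimal)
  also have "card (h ` X) \<le> card (f ` X - {u})"
    by (rule card_mono) (use \<open>u \<noteq> v\<close> v finite in \<open>auto simp: h_def\<close>)
  also have "\<dots> < card (f ` X)"
    by (rule card_Diff1_less[OF finite_imageI[OF finite] u])
  finally show False by simp
qed

text \<open>The preimage under \<psi> of \<phi> x dominates x, because an injective endomorphism of
  the finite graph on f ` X also reflects adjacency.\<close>
lemma adjacent_to_bij_eq:
  assumes \<psi>: "dcont X adj X adj \<psi>" "bij_betw \<psi> (f ` X) (f ` X)"
    and \<phi>: "\<phi> ` f ` X \<subseteq> f ` X"
    and adj: "\<And>x x'. x \<in> f ` X \<Longrightarrow> x' \<in> f ` X \<Longrightarrow> adj x x' \<Longrightarrow> adj (\<phi> x) (\<psi> x')"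
    and x: "x \<in> f ` X"
  shows "\<phi> x = \<psi> x"
proof -
  have \<psi>_adj: "\<forall>a\<in>f ` X. \<forall>b\<in>f ` X. adj a b \<longrightarrow> adj (\<psi> a) (\<psi> b)"
    using \<psi>(1) image_subset unfolding dcont_def by blast
  have \<psi>_img: "\<psi> ` f ` X \<subseteq> f ` X" and \<psi>_inj: "inj_on \<psi> (f ` X)"
    using \<psi>(2) by (simp_all add: bij_betw_def)
  have "\<phi> x \<in> \<psi> ` f ` X"
    using \<phi> x \<psi>(2) by (auto simp: bij_betw_def)
  then obtain v where v: "\<phi> x = \<psi> v" "v \<in> f ` X"
    by (rule imageE)
  have "x = v"
  proof (rule dominated_point_eq[OF x v(2)])
    fix w assume w: "w \<in> f ` X" "adj x w"
    have "adj (\<psi> v) (\<psi> w)" using adj[OF x w] v(1) by simp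
    with inj_endomorphism_reflects_adj[OF finite_imageI[OF finite, of f] \<psi>_img \<psi>_inj \<psi>_adj v(2) w(1)]
    show "adj v w" .
  qed
  then show ?thesis using v(1) by simp
qed

end

section \<open>Connected H-spaces\<close>

locale connected_np2_H_space =
  fixes X :: "'a set" and adj :: "'a \<Rightarrow> 'a \<Rightarrow> bool" and e :: 'a and \<mu> :: "'a \<times> 'a \<Rightarrow> 'a"
  assumes H_space: "np2_H_space X adj e \<mu>"
    and connected: "component X adj e = X"
begin

sublocale digital_img X adj
  using H_space by unfold_locales (simp add: np2_H_space_def)

lemma unit_mem: "e \<in> X"
  using H_space by (simp add: np2_H_space_def)

lemma path_from_unit: "y \<in> X \<Longrightarrow> (\<lambda>a b. a \<in> X \<and> b \<in> X \<and> adj a b)\<^sup>*\<^sup>* e y"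
  using connected by (auto simp: component_def)

lemma mult_closed: "a \<in> X \<Longrightarrow> b \<in> X \<Longrightarrow> \<mu> (a, b) \<in> X"
  using H_space by (simp add: np2_H_space_def dcont_def)

lemma mult_adj:
  "a \<in> X \<Longrightarrow> a' \<in> X \<Longrightarrow> b \<in> X \<Longrightarrow> b' \<in> X \<Longrightarrow> adj a a' \<Longrightarrow> adj b b' \<Longrightarrow>
     adj (\<mu> (a, b)) (\<mu> (a', b'))"
  using H_space by (simp add: np2_H_space_def dcont_def np2_adj_def)

lemma homotopy_step_mult:
  assumes "homotopy_step X adj a a'" "homotopy_step X adj b b'"
  shows "homotopy_step X adj (\<lambda>x. \<mu> (a x, b x)) (\<lambda>x. \<mu> (a' x, b' x))"
  using assms mult_closed mult_adj unfolding homotopy_step_def adjacent_maps_def dcont_def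
  by simp

lemma step_homotopic_mult:
  assumes "step_homotopic X adj a a'" "dcont X adj X adj a"
    and "step_homotopic X adj b b'" "dcont X adj X adj b"
  shows "step_homotopic X adj (\<lambda>x. \<mu> (a x, b x)) (\<lambda>x. \<mu> (a' x, b' x))"
proof -
  have "step_homotopic X adj (\<lambda>x. \<mu> (a x, b x)) (\<lambda>x. \<mu> (a' x, b x))"
    using rtranclp_map[where F = "\<lambda>c x. \<mu> (c x, b x)", OF _ assms(1)]
      homotopy_step_mult homotopy_step_eqI[OF assms(4)] by blast
  moreover have "step_homotopic X adj (\<lambda>x. \<mu> (a' x, b x)) (\<lambda>x. \<mu> (a' x, b' x))"
    using rtranclp_map[where F = "\<lambda>c x. \<mu> (a' x, c x)", OF _ assms(3)]
      homotopy_step_mult homotopy_step_eqI[OF step_homotopic_dcont[OF assms(1,2)]] by blast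
  ultimately show ?thesis by (rule rtranclp_trans)
qed

lemma id_step_homotopic_mult_right:
  assumes "y \<in> X"
  shows "step_homotopic X adj id (\<lambda>x. \<mu> (x, y))"
proof -
  have "step_homotopic X adj (\<lambda>x. \<mu> (x, e)) id"
    using H_space by (simp add: np2_H_space_def np2_homotopic_imp_step_homotopic)
  then have "step_homotopic X adj id (\<lambda>x. \<mu> (id x, e))"
    by (simp add: step_homotopic_sym)
  also have "step_homotopic X adj (\<lambda>x. \<mu> (id x, e)) (\<lambda>x. \<mu> (id x, y))"
    using step_homotopic_mult[OF _ dcont_id step_homotopic_const[OF path_from_unit[OF assms] unit_mem]]
      dcont_const[of e X adj X adj, OF unit_mem adj_refl[OF unit_mem]] by blast
  finally show ?thesis by simp
qed

lemma id_step_homotopic_mult_left: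
  assumes "y \<in> X"
  shows "step_homotopic X adj id (\<lambda>x. \<mu> (y, x))"
proof -
  have "step_homotopic X adj (\<lambda>x. \<mu> (e, x)) id"
    using H_space by (simp add: np2_H_space_def np2_homotopic_imp_step_homotopic)
  then have "step_homotopic X adj id (\<lambda>x. \<mu> (e, id x))"
    by (simp add: step_homotopic_sym)
  also have "step_homotopic X adj (\<lambda>x. \<mu> (e, id x)) (\<lambda>x. \<mu> (y, id x))"
    using step_homotopic_mult[OF step_homotopic_const[OF path_from_unit[OF assms] unit_mem] _ _ dcont_id]
      dcont_const[of e X adj X adj, OF unit_mem adj_refl[OF unit_mem]] by blast
  finally show ?thesis by simp
qed

lemma ex_min_image_deformation: "\<exists>f. min_image_deformation X adj f"
proof -
  obtain f where f: "step_homotopic X adj id f"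
    "\<forall>h. step_homotopic X adj id h \<longrightarrow> card (f ` X) \<le> card (h ` X)"
    using ex_has_least_nat[of "step_homotopic X adj id" id "\<lambda>h. card (h ` X)"] by blast
  have "min_image_deformation X adj f"
    by unfold_locales (use f in auto)
  then show ?thesis by blast
qed

lemma min_image_deformation_neighbour_eq:
  assumes "min_image_deformation X adj f" and y: "y \<in> f ` X" "adj (f e) y"
  shows "y = f e"
proof -
  interpret min_image_deformation X adj f by (rule assms(1))
  define u where "u = f e"
  have u: "u \<in> f ` X" and uX: "u \<in> X" and yX: "y \<in> X"
    using unit_mem image_subset y(1) by (auto simp: u_def)
  have translation_bij: "bij_betw (\<lambda>x. f (\<mu> (x, u))) (f ` X) (f ` X)"
    "bij_betw (\<lambda>x. f (\<mu> (u, x))) (f ` X) (f ` X)"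
    using step_homotopic_comp[OF deformation dcont_id id_step_homotopic_mult_right[OF uX] dcont_id]
      step_homotopic_comp[OF deformation dcont_id id_step_homotopic_mult_left[OF uX] dcont_id]
      mult_closed uX
    by (auto simp: id_def intro!: deformation_into_image_bij)
  have left_dcont: "dcont X adj X adj (\<lambda>x. f (\<mu> (u, x)))"
    using dcont_f step_homotopic_dcont[OF id_step_homotopic_mult_left[OF uX] dcont_id]
    by (rule dcont_comp)
  have "f (\<mu> (y, u)) = f (\<mu> (u, u))"
  proof (rule adjacent_to_bij_eq[where \<phi> = "\<lambda>z. f (\<mu> (y, z))", OF left_dcont translation_bij(2) _ _ u])
    show "(\<lambda>z. f (\<mu> (y, z))) ` f ` X \<subseteq> f ` X"
      using mult_closed yX image_subset by blast
  next
    fix z z' assume z: "z \<in> f ` X" "z' \<in> f ` X" "adj z z'"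
    have zX: "z \<in> X" "z' \<in> X" using z(1,2) image_subset by blast+
    have "adj (\<mu> (y, z)) (\<mu> (u, z'))"
      using mult_adj[OF yX uX zX adj_sym[OF uX yX y(2)[folded u_def]] z(3)] .
    then show "adj (f (\<mu> (y, z))) (f (\<mu> (u, z')))"
      using dcont_f mult_closed yX uX zX by (simp add: dcont_def)
  qed
  then show ?thesis
    using translation_bij(1) y(1) u by (auto simp: bij_betw_def u_def dest: inj_onD)
qed

lemma min_image_deformation_const:
  assumes f: "min_image_deformation X adj f" and x: "x \<in> X"
  shows "f x = f e"
proof -
  have "f y = f e" if "(\<lambda>a b. a \<in> X \<and> b \<in> X \<and> adj a b)\<^sup>*\<^sup>* e y" for y
    using that
  proof (induction rule: rtranclp_induct)
    case (step a b)
    then have "adj (f e) (f b)"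
      using min_image_deformation.dcont_f[OF f] by (auto simp: dcont_def)
    then show ?case
      using min_image_deformation_neighbour_eq[OF f] step.hyps(2) by blast
  qed simp
  then show ?thesis using path_from_unit[OF x] .
qed

theorem contractible: "np2_contractible X adj"
proof -
  obtain f where f: "min_image_deformation X adj f" using ex_min_image_deformation ..
  then have "homotopy_step X adj f (\<lambda>_. f e)"
    using min_image_deformation_const
    by (intro homotopy_step_eqI min_image_deformation.dcont_f) auto
  with min_image_deformation.deformation[OF f] have "step_homotopic X adj id (\<lambda>_. f e)"
    by (rule rtranclp.rtrancl_into_rtrancl[of "homotopy_step X adj"])
  then have "np2_homotopic X adj X adj id (\<lambda>_. f e)"
    using dcont_id by (rule step_homotopic_imp_np2_homotopic)
  moreover have "f e \<in> X"
    using min_image_deformation.image_subset[OF f] unit_mem by blast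
  ultimately show ?thesis by (auto simp: np2_contractible_def)
qed

end

theorem mainTheorem12:
  fixes X :: "(int ^ 'n) set" and adj :: "int ^ 'n \<Rightarrow> int ^ 'n \<Rightarrow> bool"
    and e :: "int ^ 'n" and \<mu> :: "(int ^ 'n) \<times> (int ^ 'n) \<Rightarrow> int ^ 'n"
  assumes "np2_H_space X adj e \<mu>"
  shows "np2_contractible (component X adj e) adj"
proof -
  interpret connected_np2_H_space "component X adj e" adj e \<mu>
    using np2_H_space_component[OF assms] component_component by unfold_locales
  show ?thesis by (rule contractible)
qed

end
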